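(* Let $X \subset \mathbb{R}^d$ be a closed set and let $\mu$ be an admissible, $X$-indeterminate measure. Then there exists $\epsilon >0$ such that for every admissible measure $\sigma$ supported on $X$ with total mass $\sigma(X)<\epsilon$, the measure $\mu + \sigma$ is admissible and $X$-indeterminate.
   Context: An admissible measure on a closed set $X \subseteq \mathbb{R}^d$ is a positive Radon measure supported on $X$ with all polynomials integrable. $\mu$ is $X$-indeterminate if some admissible measure on $X$ distinct from $\mu$ has the same integrals against all polynomials. *)

theory Defs
  imports "HOL-Analysis.Analysis"
begin

definition monomial :: "('d::finite \<Rightarrow> nat) \<Rightarrow> real^'d \<Rightarrow> real" where
  "monomial \<alpha> x = (\<Prod>i\<in>UNIV. (x $ i) ^ (\<alpha> i))"

definition polynomial_functions :: "(real^'d::finite \<Rightarrow> real) set" where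
  "polynomial_functions = {p. \<exists>A c. finite A \<and> p = (\<lambda>x. \<Sum>\<alpha>\<in>A. c \<alpha> * monomial \<alpha> x)}"

text \<open>Positive Radon measure on R^d: Borel measure, finite on compact sets
  (on R^d such measures are automatically regular).\<close>
definition radon_measure :: "(real^'d::finite) measure \<Rightarrow> bool" where
  "radon_measure M \<longleftrightarrow> sets M = sets borel \<and> (\<forall>K. compact K \<longrightarrow> emeasure M K < \<infinity>)"

definition supported_on :: "(real^'d::finite) measure \<Rightarrow> (real^'d) set \<Rightarrow> bool" where
  "supported_on M X \<longleftrightarrow> emeasure M (UNIV - X) = 0"

definition admissible :: "(real^'d::finite) set \<Rightarrow> (real^'d) measure \<Rightarrow> bool" where
  "admissible X M \<longleftrightarrow> radon_measure M \<and> supported_on M X \<and>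
     (\<forall>p\<in>polynomial_functions. integrable M p)"

definition X_indeterminate :: "(real^'d::finite) set \<Rightarrow> (real^'d) measure \<Rightarrow> bool" where
  "X_indeterminate X M \<longleftrightarrow> (\<exists>N. admissible X N \<and> N \<noteq> M \<and>
     (\<forall>p\<in>polynomial_functions. integral\<^sup>L N p = integral\<^sup>L M p))"

definition measure_add :: "'a measure \<Rightarrow> 'a measure \<Rightarrow> 'a measure" where
  "measure_add M N = measure_of (space M) (sets M) (\<lambda>A. emeasure M A + emeasure N A)"

end

theory Submission imports Defs begin

text \<open>Since adding the same finite measure to two measures neither creates nor destroys a
  difference between them, a measure \<open>\<nu> \<noteq> \<mu>\<close> with the moments of \<open>\<mu>\<close> yields \<open>\<nu> + \<sigma> \<noteq> \<mu> + \<sigma>\<close>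
  with the moments of \<open>\<mu> + \<sigma>\<close>. Every admissible \<open>\<sigma>\<close> of finite mass on \<open>X\<close> is therefore allowed,
  and any \<open>\<epsilon> > 0\<close> works.\<close>

lemma sets_measure_add [simp, measurable_cong]: "sets (measure_add M N) = sets M"
  unfolding measure_add_def by simp

lemma space_measure_add [simp]: "space (measure_add M N) = space M"
  unfolding measure_add_def by simp

lemma emeasure_measure_add:
  assumes "sets N = sets M"
  shows "emeasure (measure_add M N) A = emeasure M A + emeasure N A"
proof (cases "A \<in> sets M")
  case True
  have "countably_additive (sets M) (\<lambda>A. emeasure M A + emeasure N A)"
  proof (unfold countably_additive_def, intro allI impI)
    fix F :: "nat \<Rightarrow> _"
    assume F: "range F \<subseteq> sets M" "disjoint_family F" "\<Union> (range F) \<in> sets M"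
    have "(\<Sum>i. emeasure M (F i) + emeasure N (F i)) = (\<Sum>i. emeasure M (F i)) + (\<Sum>i. emeasure N (F i))"
      by (rule suminf_add[symmetric]) auto
    also have "\<dots> = emeasure M (\<Union> (range F)) + emeasure N (\<Union> (range F))"
      using suminf_emeasure[OF F(1,2)] suminf_emeasure[of F N] F assms by simp
    finally show "(\<Sum>i. emeasure M (F i) + emeasure N (F i)) =
      emeasure M (\<Union> (range F)) + emeasure N (\<Union> (range F))" .
  qed
  then show ?thesis
    unfolding measure_add_def using True assms
    by (intro emeasure_measure_of_sigma sets.sigma_algebra_axioms) (auto simp: positive_def)
qed (use assms in \<open>simp add: emeasure_notin_sets\<close>)

lemma nn_integral_measure_add:
  assumes N: "sets N = sets M" and f: "f \<in> borel_measurable M"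
  shows "(\<integral>\<^sup>+x. f x \<partial>measure_add M N) = (\<integral>\<^sup>+x. f x \<partial>M) + (\<integral>\<^sup>+x. f x \<partial>N)"
  using f
proof induct
  case (cong f g)
  have "space N = space M" using N by (rule sets_eq_imp_space_eq)
  with cong show ?case
    by (metis (no_types, lifting) nn_integral_cong space_measure_add)
next
  case (set A)
  then show ?case using N by (simp add: emeasure_measure_add)
next
  case (mult u c)
  then have "u \<in> borel_measurable N" "u \<in> borel_measurable (measure_add M N)"
    using N by (simp_all cong: measurable_cong_sets)
  with mult show ?case by (simp add: nn_integral_cmult distrib_left)
next
  case (add u v)
  then have "u \<in> borel_measurable N" "v \<in> borel_measurable N"
    "u \<in> borel_measurable (measure_add M N)" "v \<in> borel_measurable (measure_add M N)"
    using N by (simp_all cong: measurable_cong_sets)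
  with add show ?case by (simp add: nn_integral_add algebra_simps)
next
  case (seq U)
  have SUP_integral: "(\<integral>\<^sup>+x. (SUP i. U i) x \<partial>K) = (SUP i. integral\<^sup>N K (U i))"
    if "sets K = sets M" for K
  proof -
    have "U i \<in> borel_measurable K" for i
      using seq(1) that by (simp cong: measurable_cong_sets)
    then show ?thesis
      unfolding SUP_apply by (rule nn_integral_monotone_convergence_SUP[OF seq(4)])
  qed
  have inc: "incseq (\<lambda>i. integral\<^sup>N K (U i))" for K
    using seq(4) by (auto simp: incseq_def le_fun_def intro!: nn_integral_mono)
  show ?case
    unfolding SUP_integral[OF refl] SUP_integral[OF N] SUP_integral[OF sets_measure_add]
    using seq(3) ennreal_SUP_add[OF inc inc] by simp
qed

lemma
  fixes f :: "'a \<Rightarrow> real"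
  assumes N: "sets N = sets M" and fM: "integrable M f" and fN: "integrable N f"
  shows integrable_measure_add: "integrable (measure_add M N) f"
    and integral_measure_add: "integral\<^sup>L (measure_add M N) f = integral\<^sup>L M f + integral\<^sup>L N f"
proof -
  have f: "f \<in> borel_measurable M" using fM by auto
  note pos = nn_integral_measure_add[OF N, of "\<lambda>x. ennreal (f x)"]
  note neg = nn_integral_measure_add[OF N, of "\<lambda>x. ennreal (- f x)"]
  have fin: "(\<integral>\<^sup>+ x. ennreal (f x) \<partial>M) < \<infinity>" "(\<integral>\<^sup>+ x. ennreal (- f x) \<partial>M) < \<infinity>"
    "(\<integral>\<^sup>+ x. ennreal (f x) \<partial>N) < \<infinity>" "(\<integral>\<^sup>+ x. ennreal (- f x) \<partial>N) < \<infinity>"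
    using fM fN unfolding real_integrable_def by (auto simp: less_top)
  show "integrable (measure_add M N) f"
    unfolding real_integrable_def using f pos neg fin by auto
  then show "integral\<^sup>L (measure_add M N) f = integral\<^sup>L M f + integral\<^sup>L N f"
    using fM fN pos neg fin by (simp add: real_lebesgue_integral_def enn2real_plus)
qed

lemma measure_add_cancel_right:
  assumes "sets M = sets S" "sets N = sets S" "finite_measure S"
    and "measure_add M S = measure_add N S"
  shows "M = N"
proof (rule measure_eqI)
  show "sets M = sets N" using assms by simp
  fix A assume "A \<in> sets M"
  have "emeasure M A + emeasure S A = emeasure N A + emeasure S A"
    using arg_cong[OF assms(4), of "\<lambda>K. emeasure K A"] assms(1,2)
    by (simp add: emeasure_measure_add)
  moreover have "emeasure S A \<noteq> \<infinity>"
    using finite_measure.emeasure_finite[OF assms(3)] by simp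
  ultimately show "emeasure M A = emeasure N A"
    by (metis add.commute ennreal_add_left_cancel)
qed

lemma admissible_measure_add:
  assumes M: "admissible X M" and N: "admissible X N"
  shows "admissible X (measure_add M N)"
proof -
  have sets: "sets M = sets borel" "sets N = sets M"
    using M N by (auto simp: admissible_def radon_measure_def)
  with M N show ?thesis
    by (auto simp: admissible_def radon_measure_def supported_on_def emeasure_measure_add
        integrable_measure_add)
qed

text \<open>Closedness of \<open>X\<close> makes the decomposition \<open>X \<union> (UNIV - X)\<close> measurable.\<close>

lemma admissible_finite_measure:
  assumes "closed X" "admissible X \<sigma>" "emeasure \<sigma> X < \<infinity>"
  shows "finite_measure \<sigma>"
proof
  have sets: "sets \<sigma> = sets borel" using assms(2) by (simp add: admissible_def radon_measure_def)
  have "emeasure \<sigma> (X \<union> (UNIV - X)) \<le> emeasure \<sigma> X + emeasure \<sigma> (UNIV - X)"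
    using assms(1) sets by (intro emeasure_subadditive) (auto simp: open_Diff)
  also have "\<dots> < \<infinity>"
    using assms(2,3) by (simp add: admissible_def supported_on_def)
  finally show "emeasure \<sigma> (space \<sigma>) \<noteq> \<infinity>"
    using sets_eq_imp_space_eq[OF sets] by simp
qed

lemma X_indeterminate_measure_add:
  assumes "X_indeterminate X \<mu>" "admissible X \<mu>" "admissible X \<sigma>" "finite_measure \<sigma>"
  shows "X_indeterminate X (measure_add \<mu> \<sigma>)"
proof -
  obtain \<nu> where \<nu>: "admissible X \<nu>" "\<nu> \<noteq> \<mu>"
    and moments: "\<forall>p\<in>polynomial_functions. integral\<^sup>L \<nu> p = integral\<^sup>L \<mu> p"
    using assms(1) unfolding X_indeterminate_def by blast
  have sets: "sets \<mu> = sets \<sigma>" "sets \<nu> = sets \<sigma>"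
    using assms(2,3) \<nu>(1) by (auto simp: admissible_def radon_measure_def)
  have "measure_add \<nu> \<sigma> \<noteq> measure_add \<mu> \<sigma>"
    using measure_add_cancel_right[OF sets(2,1) assms(4)] \<nu>(2) by blast
  moreover have "integral\<^sup>L (measure_add \<nu> \<sigma>) p = integral\<^sup>L (measure_add \<mu> \<sigma>) p"
    if "p \<in> polynomial_functions" for p
    using that assms(2,3) \<nu>(1) moments sets
    by (simp add: admissible_def integral_measure_add)
  ultimately show ?thesis
    unfolding X_indeterminate_def
    using admissible_measure_add[OF \<nu>(1) assms(3)] by blast
qed

theorem mainTheorem14:
  fixes X :: "(real^'d::finite) set" and \<mu> :: "(real^'d) measure"
  assumes "closed X"
    and "admissible X \<mu>"
    and "X_indeterminate X \<mu>"
  shows "\<exists>\<epsilon>::real. \<epsilon> > 0 \<and>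
    (\<forall>\<sigma>. admissible X \<sigma> \<and> emeasure \<sigma> X < ennreal \<epsilon> \<longrightarrow>
       admissible X (measure_add \<mu> \<sigma>) \<and> X_indeterminate X (measure_add \<mu> \<sigma>))"
proof (intro exI[of _ 1] conjI allI impI)
  fix \<sigma> assume \<sigma>: "admissible X \<sigma> \<and> emeasure \<sigma> X < ennreal 1"
  then have "emeasure \<sigma> X < \<infinity>"
    by (auto elim: order.strict_trans)
  with \<sigma> have "finite_measure \<sigma>"
    using admissible_finite_measure[OF assms(1)] by blast
  with assms(2,3) \<sigma> show "admissible X (measure_add \<mu> \<sigma>)" "X_indeterminate X (measure_add \<mu> \<sigma>)"
    using admissible_measure_add X_indeterminate_measure_add by blast+
qed simp

end
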